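(* Let $A$ be an alphabet and $A^\ast$ the set of all finite words over $A$ (including the empty word), regarded as the structure $(A^\ast,\cdot)$ with the binary concatenation operation. For all words $\mathbf a,\mathbf b,\mathbf c,\mathbf d\in A^\ast$, if $\mathbf a\mathbf b=\mathbf c\mathbf d$ then $(A^\ast,\cdot)\models \mathbf a:\mathbf b::\mathbf c:\mathbf d$.
   Context: The analogical proportion relation: a c-formula is a conjunctive formula (built from atomic formulas using only $\wedge,\exists,\forall$; parameters from the universe allowed) with free variables exactly $x,y$ whose dependency graph (vertices: its variables; edge $\{w,z\}$ iff $w,z$ occur in a common atomic subformula) is connected. $\uparrow_{\mathfrak A}(a\to b)=\{\alpha:\mathfrak A\models\alpha(a,b)\}$, $\uparrow_{\mathfrak A}(a\to b:\cdot\, c\to d)=\uparrow_{\mathfrak A}(a\to b)\cap\uparrow_{\mathfrak A}(c\to d)$. A c-formula is trivial iff it is in $\uparrow_{\mathfrak A}(a\to b:\cdot\, c\to d)$ for all $a,b,c,d$; $\emptyset_{\mathfrak A}$ is the set of these. $\mathfrak A\models a\to b:\cdot\, c\to d$ iff either $\uparrow_{\mathfrak A}(a\to b)\cup\uparrow_{\mathfrak A}(c\to d)$ consists only of trivial formulas, or $\uparrow_{\mathfrak A}(a\to b:\cdot\, c\to d)$ contains a non-trivial formula and for every $d'$, $\emptyset_{\mathfrak A}\subsetneq\uparrow(a\to b:\cdot\, c\to d)\subseteq\uparrow(a\to b:\cdot\, c\to d')$ implies $\emptyset_{\mathfrak A}\subsetneq\uparrow(a\to b:\cdot\, c\to d')\subseteq\uparrow(a\to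 b:\cdot\, c\to d)$. $\mathfrak A\models a:b::c:d$ iff $\mathfrak A\models a\to b:\cdot\, c\to d$, $b\to a:\cdot\, d\to c$, $c\to d:\cdot\, a\to b$ and $d\to c:\cdot\, b\to a$. *)

theory Defs
  imports Main
begin

text \<open>First-order language of the structure (A*, \<cdot>): terms built from variables
  (indexed by nat), parameters (words, i.e. elements of the universe) and the binary
  concatenation; atomic formulas are equations between terms.\<close>

datatype 'a trm = Var nat | Par "'a list" | Cat "'a trm" "'a trm"

datatype 'a fm = Eq "'a trm" "'a trm" | Conj "'a fm" "'a fm" | Ex nat "'a fm" | All nat "'a fm"

fun tval :: "(nat \<Rightarrow> 'a list) \<Rightarrow> 'a trm \<Rightarrow> 'a list" where
  "tval e (Var v) = e v"
| "tval e (Par w) = w"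
| "tval e (Cat s t) = tval e s @ tval e t"

fun sat :: "(nat \<Rightarrow> 'a list) \<Rightarrow> 'a fm \<Rightarrow> bool" where
  "sat e (Eq s t) = (tval e s = tval e t)"
| "sat e (Conj f g) = (sat e f \<and> sat e g)"
| "sat e (Ex v f) = (\<exists>w. sat (e(v := w)) f)"
| "sat e (All v f) = (\<forall>w. sat (e(v := w)) f)"

fun tvars :: "'a trm \<Rightarrow> nat set" where
  "tvars (Var v) = {v}"
| "tvars (Par w) = {}"
| "tvars (Cat s t) = tvars s \<union> tvars t"

fun fv :: "'a fm \<Rightarrow> nat set" where
  "fv (Eq s t) = tvars s \<union> tvars t"
| "fv (Conj f g) = fv f \<union> fv g"
| "fv (Ex v f) = fv f - {v}"
| "fv (All v f) = fv f - {v}"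

fun atoms :: "'a fm \<Rightarrow> ('a trm \<times> 'a trm) set" where
  "atoms (Eq s t) = {(s, t)}"
| "atoms (Conj f g) = atoms f \<union> atoms g"
| "atoms (Ex v f) = atoms f"
| "atoms (All v f) = atoms f"

definition dep_vertices :: "'a fm \<Rightarrow> nat set" where
  "dep_vertices f = (\<Union>(s, t) \<in> atoms f. tvars s \<union> tvars t)"

definition dep_edges :: "'a fm \<Rightarrow> (nat \<times> nat) set" where
  "dep_edges f = {(v, w). \<exists>(s, t) \<in> atoms f. v \<in> tvars s \<union> tvars t \<and> w \<in> tvars s \<union> tvars t}"

definition dep_connected :: "'a fm \<Rightarrow> bool" where
  "dep_connected f = (\<forall>v \<in> dep_vertices f. \<forall>w \<in> dep_vertices f. (v, w) \<in> (dep_edges f)\<^sup>*)"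

text \<open>The two distinguished free variables: x = Var 0, y = Var 1.\<close>
definition c_formula :: "'a fm \<Rightarrow> bool" where
  "c_formula f = (fv f = {0, 1} \<and> dep_connected f)"

definition asg :: "'a list \<Rightarrow> 'a list \<Rightarrow> nat \<Rightarrow> 'a list" where
  "asg a b = (\<lambda>v. if v = 0 then a else if v = 1 then b else [])"

definition up :: "'a list \<Rightarrow> 'a list \<Rightarrow> 'a fm set" where
  "up a b = {f. c_formula f \<and> sat (asg a b) f}"

definition up2 :: "'a list \<Rightarrow> 'a list \<Rightarrow> 'a list \<Rightarrow> 'a list \<Rightarrow> 'a fm set" where
  "up2 a b c d = up a b \<inter> up c d"

definition trivial_fms :: "'a fm set" where
  "trivial_fms = {f. c_formula f \<and> (\<forall>a b c d. f \<in> up2 a b c d)}"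

definition arrow_prop :: "'a list \<Rightarrow> 'a list \<Rightarrow> 'a list \<Rightarrow> 'a list \<Rightarrow> bool" where
  "arrow_prop a b c d =
     (up a b \<union> up c d \<subseteq> trivial_fms \<or>
      ((up2 a b c d - trivial_fms \<noteq> {}) \<and>
       (\<forall>d'. trivial_fms \<subset> up2 a b c d \<and> up2 a b c d \<subseteq> up2 a b c d' \<longrightarrow>
              trivial_fms \<subset> up2 a b c d' \<and> up2 a b c d' \<subseteq> up2 a b c d)))"

definition analogy :: "'a list \<Rightarrow> 'a list \<Rightarrow> 'a list \<Rightarrow> 'a list \<Rightarrow> bool" where
  "analogy a b c d =
     (arrow_prop a b c d \<and> arrow_prop b a d c \<and> arrow_prop c d a b \<and> arrow_prop d c b a)"

end

theory Submission
  imports Defs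
begin

text \<open>The equation x y = a b (with the word a b as a parameter) is a non-trivial c-formula
  satisfied by both (a, b) and (c, d); since words cancel on the left, it determines the
  second argument once the first is fixed, so no d' can do better than d. The reversed
  arrows are handled in the same way by y x = a b, using cancellation on the right.\<close>

definition cat_fm :: "'a list \<Rightarrow> 'a fm" where
  "cat_fm w = Eq (Cat (Var 0) (Var 1)) (Par w)"

definition cat_rev_fm :: "'a list \<Rightarrow> 'a fm" where
  "cat_rev_fm w = Eq (Cat (Var 1) (Var 0)) (Par w)"

lemma c_formula_cat_fm: "c_formula (cat_fm w)"
  unfolding c_formula_def dep_connected_def dep_vertices_def dep_edges_def cat_fm_def
  by (auto intro!: r_into_rtrancl)

lemma c_formula_cat_rev_fm: "c_formula (cat_rev_fm w)"
  unfolding c_formula_def dep_connected_def dep_vertices_def dep_edges_def cat_rev_fm_def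
  by (auto intro!: r_into_rtrancl)

lemma cat_fm_in_up_iff: "cat_fm w \<in> up a b \<longleftrightarrow> a @ b = w"
  by (simp add: up_def c_formula_cat_fm) (simp add: cat_fm_def asg_def)

lemma cat_rev_fm_in_up_iff: "cat_rev_fm w \<in> up a b \<longleftrightarrow> b @ a = w"
  by (simp add: up_def c_formula_cat_rev_fm) (simp add: cat_rev_fm_def asg_def)

lemma trivial_fms_in_up: "f \<in> trivial_fms \<Longrightarrow> f \<in> up a b"
  unfolding trivial_fms_def up2_def by blast

lemma cat_fm_not_trivial: "cat_fm w \<notin> trivial_fms"
  using trivial_fms_in_up[of "cat_fm w" "w @ [undefined]" "[]"]
  by (auto simp: cat_fm_in_up_iff)

lemma cat_rev_fm_not_trivial: "cat_rev_fm w \<notin> trivial_fms"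
  using trivial_fms_in_up[of "cat_rev_fm w" "[]" "w @ [undefined]"]
  by (auto simp: cat_rev_fm_in_up_iff)

lemma arrow_prop_if_determining_fm:
  assumes "f \<in> up2 a b c d" and "f \<notin> trivial_fms"
    and determines: "\<And>d'. f \<in> up c d' \<Longrightarrow> d' = d"
  shows "arrow_prop a b c d"
proof -
  have "up2 a b c d - trivial_fms \<noteq> {}"
    using assms(1,2) by blast
  moreover have "d' = d" if "up2 a b c d \<subseteq> up2 a b c d'" for d'
    using that assms(1) determines by (auto simp: up2_def)
  ultimately show ?thesis
    unfolding arrow_prop_def by blast
qed

lemma arrow_prop_of_append_eq:
  assumes "a @ b = c @ d"
  shows "arrow_prop a b c d"
  by (rule arrow_prop_if_determining_fm[of "cat_fm (a @ b)"])
     (use assms cat_fm_not_trivial in \<open>auto simp: up2_def cat_fm_in_up_iff\<close>)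

lemma arrow_prop_swapped_of_append_eq:
  assumes "a @ b = c @ d"
  shows "arrow_prop b a d c"
  by (rule arrow_prop_if_determining_fm[of "cat_rev_fm (a @ b)"])
     (use assms cat_rev_fm_not_trivial in \<open>auto simp: up2_def cat_rev_fm_in_up_iff\<close>)

theorem corollary11:
  fixes a b c d :: "'a list"
  assumes "a @ b = c @ d"
  shows "analogy a b c d"
  unfolding analogy_def
  using arrow_prop_of_append_eq arrow_prop_swapped_of_append_eq assms assms[symmetric]
  by blast

end
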